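(* Let $1\le p<2$, $f\in\mathcal H_0$, $u$ the solution of $\partial_tu+\partial J(u)\ni0$, $u(0)=f$, with extinction time $T_{\mathrm{ex}}$, $\lambda:=1/((2-p)T_{\mathrm{ex}})$, $a(t)=(1-(2-p)\lambda t)^{\frac1{2-p}}$ and $w(t):=u(t)/a(t)$ for $0\le t<T_{\mathrm{ex}}$. Then $$(2-p)\lambda_1T_{\mathrm{ex}}\le\|w(t)\|^{2-p}\le(2-p)T_{\mathrm{ex}}\Lambda(t),\qquad t\ge0,$$ and in particular $t\mapsto w(t)$ is bounded.
   Context: $\mathcal H$ is a real Hilbert space with inner product $\langle\cdot,\cdot\rangle$ and norm $\|\cdot\|$. $J:\mathcal H\to\mathbb R\cup\{\infty\}$ is convex, lower semicontinuous, proper, with dense effective domain, and absolutely $p$-homogeneous: $J(cu)=|c|^pJ(u)$ for $c\ne0$, $J(0)=0$. Standing coercivity assumption: $\lambda_1:=\inf_{u\in\mathcal H_0}pJ(u)/\|u\|^p>0$. $\partial J(u)=\{\zeta: J(u)+\langle\zeta,v-u\rangle\le J(v)\ \forall v\}$; $\mathcal N(J)=\{u:J(u)=0\}$; $\mathcal H_0:=\mathcal N(J)^\perp\setminus\{0\}$. The gradient flow solution (Brezis) is the unique continuous $u:[0,\infty)\to\mathcal H$, Lipschitz on $[\delta,\infty)$ for all $\delta>0$, right-differentiable on $(0,\infty)$ with $u(0)=f$ and $\partial_t^+u(t)=-\zeta(t)$, $\zeta(t)$ the minimal-norm element of $\partial J(u(t))$. $T_{\mathrm{ex}}:=\inf\{T>0:u(t)=0\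 \forall t\ge T\}$ (finite for $p<2$). $\Lambda(t):=pJ(u(t))/\|u(t)\|^p$ for $0\le t<T_{\mathrm{ex}}$ (possibly $+\infty$ at $t=0$). *)

theory Defs
  imports "HOL-Analysis.Analysis" "HOL-Library.Extended_Real"
begin

text \<open>Real Hilbert space: type class real_inner together with complete_space.
  Functionals J take values in the extended reals (ereal); the value -\<infinity> is
  excluded by properness.\<close>

definition convex_fun :: "('a::real_vector \<Rightarrow> ereal) \<Rightarrow> bool" where
  "convex_fun J \<longleftrightarrow> (\<forall>x y \<theta>. 0 < \<theta> \<and> \<theta> < 1 \<longrightarrow>
      J ((1 - \<theta>) *\<^sub>R x + \<theta> *\<^sub>R y) \<le> ereal (1 - \<theta>) * J x + ereal \<theta> * J y)"

definition lsc_fun :: "('a::topological_space \<Rightarrow> ereal) \<Rightarrow> bool" where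
  "lsc_fun J \<longleftrightarrow> (\<forall>c::real. closed {x. J x \<le> ereal c})"

definition proper_fun :: "('a \<Rightarrow> ereal) \<Rightarrow> bool" where
  "proper_fun J \<longleftrightarrow> (\<forall>x. J x \<noteq> -\<infinity>) \<and> (\<exists>x. J x \<noteq> \<infinity>)"

definition dense_domain :: "('a::topological_space \<Rightarrow> ereal) \<Rightarrow> bool" where
  "dense_domain J \<longleftrightarrow> closure {x. J x < \<infinity>} = UNIV"

definition abs_homogeneous :: "real \<Rightarrow> ('a::real_vector \<Rightarrow> ereal) \<Rightarrow> bool" where
  "abs_homogeneous p J \<longleftrightarrow> J 0 = 0 \<and>
     (\<forall>c u. c \<noteq> 0 \<longrightarrow> J (c *\<^sub>R u) = ereal (\<bar>c\<bar> powr p) * J u)"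

definition null_set :: "('a \<Rightarrow> ereal) \<Rightarrow> 'a set" where
  "null_set J = {u. J u = 0}"

definition H0 :: "('a::real_inner \<Rightarrow> ereal) \<Rightarrow> 'a set" where
  "H0 J = {u. \<forall>v \<in> null_set J. inner u v = 0} - {0}"

definition lambda1 :: "real \<Rightarrow> ('a::real_inner \<Rightarrow> ereal) \<Rightarrow> ereal" where
  "lambda1 p J = (INF u \<in> H0 J. ereal p * J u / ereal (norm u powr p))"

definition subdiff :: "('a::real_inner \<Rightarrow> ereal) \<Rightarrow> 'a \<Rightarrow> 'a set" where
  "subdiff J u = {\<zeta>. \<forall>v. J u + ereal (inner \<zeta> (v - u)) \<le> J v}"

definition min_norm_subgrad :: "('a::real_inner \<Rightarrow> ereal) \<Rightarrow> 'a \<Rightarrow> 'a \<Rightarrow> bool" where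
  "min_norm_subgrad J u \<zeta> \<longleftrightarrow> \<zeta> \<in> subdiff J u \<and> (\<forall>\<eta> \<in> subdiff J u. norm \<zeta> \<le> norm \<eta>)"

definition gradient_flow :: "('a::real_inner \<Rightarrow> ereal) \<Rightarrow> 'a \<Rightarrow> (real \<Rightarrow> 'a) \<Rightarrow> bool" where
  "gradient_flow J f u \<longleftrightarrow>
     continuous_on {0..} u \<and>
     (\<forall>\<delta>>0. \<exists>L. L-lipschitz_on {\<delta>..} u) \<and>
     u 0 = f \<and>
     (\<forall>t>0. \<exists>\<zeta>. min_norm_subgrad J (u t) \<zeta> \<and>
                (u has_vector_derivative - \<zeta>) (at t within {t..}))"

definition extinction_time :: "(real \<Rightarrow> 'a::zero) \<Rightarrow> real" where
  "extinction_time u = Inf {T. T > 0 \<and> (\<forall>t\<ge>T. u t = 0)}"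

definition Rayleigh :: "real \<Rightarrow> ('a::real_normed_vector \<Rightarrow> ereal) \<Rightarrow> (real \<Rightarrow> 'a) \<Rightarrow> real \<Rightarrow> ereal" where
  "Rayleigh p J u t = ereal p * J (u t) / ereal (norm (u t) powr p)"

end

theory Submission
  imports Defs
begin

text \<open>Along the flow the right derivative of |u|^2 is -2 <zeta, u> = -2 p J(u) by Euler's
  identity, so phi = |u|^(2-p) has right derivative -(2 - p) Lambda, Lambda being the
  Rayleigh quotient. As u stays in H_0, Lambda is at least lambda_1; this forces extinction
  at a finite time T_ex, and integrating from t to T_ex gives phi t >= (2 - p) lambda_1 (T_ex - t).
  Conversely, the right derivative of J(u) is -|zeta|^2, which together with the
  Cauchy-Schwarz inequality <zeta, u>^2 <= |zeta|^2 |u|^2 makes Lambda non-increasing, whence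
  phi t <= (2 - p) (T_ex - t) Lambda t. Since a(t)^(2-p) = 1 - t / T_ex, dividing by it gives
  both bounds for w. Throughout, one-sided derivatives suffice because a continuous function
  with non-positive right derivative is non-increasing. The delicate step is the derivative
  of J(u), which needs right continuity of the minimal section zeta; weak compactness is
  replaced by approximate subdifferentials and completeness.\<close>

section \<open>Monotonicity from right derivatives\<close>

lemma real_induction:
  fixes c b :: real
  assumes "c \<le> b" and base: "P c"
    and left: "\<And>x. c < x \<Longrightarrow> x \<le> b \<Longrightarrow> (\<And>y. c \<le> y \<Longrightarrow> y < x \<Longrightarrow> P y) \<Longrightarrow> P x"
    and right: "\<And>x. c \<le> x \<Longrightarrow> x < b \<Longrightarrow> (\<And>y. c \<le> y \<Longrightarrow> y \<le> x \<Longrightarrow> P y) \<Longrightarrow>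
      \<exists>x'>x. \<forall>y. x < y \<and> y < x' \<longrightarrow> P y"
  shows "P b"
proof -
  define S where "S = {x \<in> {c..b}. \<forall>y\<in>{c..x}. P y}"
  define s where "s = Sup S"
  have "c \<in> S" using \<open>c \<le> b\<close> base by (auto simp: S_def)
  have bdd: "bdd_above S" unfolding S_def by (rule bdd_aboveI[of _ b]) auto
  have "c \<le> s" unfolding s_def using \<open>c \<in> S\<close> bdd by (rule cSup_upper)
  have "s \<le> b" unfolding s_def using \<open>c \<in> S\<close> by (intro cSup_least) (auto simp: S_def)
  have below: "P y" if "c \<le> y" "y < s" for y
  proof -
    obtain x where "x \<in> S" "y < x" using less_cSupD[of S y] \<open>c \<in> S\<close> \<open>y < s\<close> unfolding s_def by blast
    then show ?thesis using \<open>c \<le> y\<close> by (auto simp: S_def)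
  qed
  have "P s" using left[of s] below base \<open>c \<le> s\<close> \<open>s \<le> b\<close> by (cases "c = s") auto
  then have upto_s: "P y" if "c \<le> y" "y \<le> s" for y using below that by (cases "y = s") auto
  show ?thesis
  proof (rule ccontr)
    assume "\<not> P b"
    with \<open>P s\<close> \<open>s \<le> b\<close> have "s < b" by (cases "s = b") auto
    then obtain x' where "x' > s" and beyond: "\<And>y. s < y \<Longrightarrow> y < x' \<Longrightarrow> P y"
      using right[OF \<open>c \<le> s\<close> _ upto_s] by blast
    define x where "x = min b ((s + x') / 2)"
    have "s < x" "x \<le> b" "x < x'" using \<open>s < b\<close> \<open>x' > s\<close> by (auto simp: x_def min_def)
    then have "x \<in> S" using upto_s beyond \<open>c \<le> s\<close> by (force simp: S_def)
    then have "x \<le> s" unfolding s_def using bdd by (rule cSup_upper)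
    then show False using \<open>s < x\<close> by simp
  qed
qed

lemma right_DERIV_less_imp_increment_le:
  fixes f :: "real \<Rightarrow> real"
  assumes "c \<le> b" and cont: "continuous_on {c..b} f"
    and der: "\<And>x. c \<le> x \<Longrightarrow> x < b \<Longrightarrow> (f has_real_derivative f' x) (at_right x)"
    and less: "\<And>x. c \<le> x \<Longrightarrow> x < b \<Longrightarrow> f' x < e"
  shows "f b \<le> f c + e * (b - c)"
proof (rule real_induction[OF \<open>c \<le> b\<close>])
  fix x assume "c < x" "x \<le> b" and below: "\<And>y. c \<le> y \<Longrightarrow> y < x \<Longrightarrow> f y \<le> f c + e * (y - c)"
  have "(f \<longlongrightarrow> f x) (at x within {c..x})"
    using continuous_on_subset[OF cont, of "{c..x}"] \<open>c < x\<close> \<open>x \<le> b\<close>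
    by (simp add: continuous_on_def)
  then have "(f \<longlongrightarrow> f x) (at_left x)" using at_within_Icc_at_left[OF \<open>c < x\<close>] by simp
  moreover have "eventually (\<lambda>y. f y \<le> f c + e * (y - c)) (at_left x)"
    using eventually_at_left_real[OF \<open>c < x\<close>] by (rule eventually_mono) (auto intro: below)
  moreover have "((\<lambda>y. f c + e * (y - c)) \<longlongrightarrow> f c + e * (x - c)) (at_left x)"
    by (intro tendsto_intros)
  ultimately show "f x \<le> f c + e * (x - c)" by (intro tendsto_le[OF trivial_limit_at_left_real])
next
  fix x assume "c \<le> x" "x < b" and upto: "\<And>y. c \<le> y \<Longrightarrow> y \<le> x \<Longrightarrow> f y \<le> f c + e * (y - c)"
  have "((\<lambda>y. (f y - f x) / (y - x)) \<longlongrightarrow> f' x) (at_right x)"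
    using der[OF \<open>c \<le> x\<close> \<open>x < b\<close>] by (simp add: has_field_derivative_iff)
  then have "eventually (\<lambda>y. (f y - f x) / (y - x) < e) (at_right x)"
    by (rule order_tendstoD) (rule less[OF \<open>c \<le> x\<close> \<open>x < b\<close>])
  then obtain x' where "x' > x" and slope: "\<And>y. x < y \<Longrightarrow> y < x' \<Longrightarrow> (f y - f x) / (y - x) < e"
    unfolding eventually_at_right_field by blast
  have "f y \<le> f c + e * (y - c)" if "x < y" "y < x'" for y
    using slope[OF that] upto[OF \<open>c \<le> x\<close> order_refl] that
    by (simp add: divide_less_eq algebra_simps)
  then show "\<exists>x'>x. \<forall>y. x < y \<and> y < x' \<longrightarrow> f y \<le> f c + e * (y - c)"
    using \<open>x' > x\<close> by blast
qed simp

lemma right_DERIV_nonpos_imp_nonincreasing: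
  fixes f :: "real \<Rightarrow> real"
  assumes ab: "a \<le> b" and cont: "continuous_on {a..b} f"
    and der: "\<And>x. a < x \<Longrightarrow> x < b \<Longrightarrow> (f has_real_derivative f' x) (at_right x)"
    and nonpos: "\<And>x. a < x \<Longrightarrow> x < b \<Longrightarrow> f' x \<le> 0"
  shows "f b \<le> f a"
proof (cases "a = b")
  case False
  with ab have "a < b" by simp
  have linear_slack: "f b \<le> f a + e * (b - a)" if "e > 0" for e
  proof -
    have near_a: "f b \<le> f c + e * (b - c)" if "a < c" "c < b" for c
    proof (rule right_DERIV_less_imp_increment_le[where f' = f'])
      show "continuous_on {c..b} f" using cont by (rule continuous_on_subset) (use that in auto)
      fix x assume "c \<le> x" "x < b"
      then show "(f has_real_derivative f' x) (at_right x)" "f' x < e"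
        using der nonpos[of x] that \<open>e > 0\<close> by auto
    qed (use that in simp)
    have "eventually (\<lambda>c. f b \<le> f c + e * (b - c)) (at_right a)"
      using eventually_at_right_real[OF \<open>a < b\<close>] by (rule eventually_mono) (auto intro: near_a)
    moreover have "(f \<longlongrightarrow> f a) (at_right a)"
      using cont \<open>a < b\<close> by (simp add: continuous_on_def at_within_Icc_at_right[symmetric])
    then have "((\<lambda>c. f c + e * (b - c)) \<longlongrightarrow> f a + e * (b - a)) (at_right a)"
      by (intro tendsto_intros)
    ultimately show ?thesis
      by (intro tendsto_le[OF trivial_limit_at_right_real _ tendsto_const])
  qed
  show ?thesis
  proof (rule field_le_epsilon)
    fix e :: real assume "e > 0"
    then show "f b \<le> f a + e" using linear_slack[of "e / (b - a)"] \<open>a < b\<close> by simp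
  qed
qed simp

lemma right_DERIV_nonneg_imp_nondecreasing:
  fixes f :: "real \<Rightarrow> real"
  assumes "a \<le> b" and "continuous_on {a..b} f"
    and der: "\<And>x. a < x \<Longrightarrow> x < b \<Longrightarrow> (f has_real_derivative f' x) (at_right x)"
    and "\<And>x. a < x \<Longrightarrow> x < b \<Longrightarrow> f' x \<ge> 0"
  shows "f a \<le> f b"
  using right_DERIV_nonpos_imp_nonincreasing[of a b "\<lambda>x. - f x" "\<lambda>x. - f' x"] assms
  by (auto intro: continuous_intros DERIV_minus)

section \<open>Hilbert space geometry\<close>

lemma Cauchy_if_dist_le_tendsto_0:
  fixes X :: "nat \<Rightarrow> 'a::metric_space"
  assumes "\<And>n k. n \<le> k \<Longrightarrow> dist (X n) (X k) \<le> B n" and "B \<longlonglongrightarrow> 0"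
  shows "Cauchy X"
  unfolding Cauchy_altdef
proof (intro allI impI)
  fix e :: real assume "e > 0"
  then obtain M where "\<And>n. n \<ge> M \<Longrightarrow> B n < e"
    using order_tendstoD(2)[OF assms(2)] by (auto simp: eventually_sequentially)
  then show "\<exists>M. \<forall>m\<ge>M. \<forall>n>m. dist (X m) (X n) < e"
    using assms(1) by (meson le_less_trans less_imp_le)
qed

lemma parallelogram_law:
  fixes a b :: "'a::real_inner"
  shows "norm (a + b) ^ 2 + norm (a - b) ^ 2 = 2 * norm a ^ 2 + 2 * norm b ^ 2"
  by (simp add: power2_norm_eq_inner inner_add_left inner_add_right inner_diff_left
      inner_diff_right inner_commute)

lemma convex_norm_diff_sq_le:
  fixes a b :: "'a::real_inner"
  assumes "convex S" "a \<in> S" "b \<in> S" and lower: "\<And>y. y \<in> S \<Longrightarrow> d \<le> norm y ^ 2"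
  shows "norm (a - b) ^ 2 \<le> 2 * (norm a ^ 2 - d) + 2 * (norm b ^ 2 - d)"
proof -
  have "(1/2) *\<^sub>R a + (1/2) *\<^sub>R b \<in> S" using assms(1-3) unfolding convex_def by auto
  then have "d \<le> norm ((1/2) *\<^sub>R (a + b)) ^ 2" by (simp add: lower scaleR_add_right)
  then have "4 * d \<le> norm (a + b) ^ 2" by (simp add: power_divide)
  moreover have "norm (a - b) ^ 2 = 2 * norm a ^ 2 + 2 * norm b ^ 2 - norm (a + b) ^ 2"
    using parallelogram_law[of a b] by simp
  ultimately show ?thesis by (simp add: algebra_simps)
qed

lemma decseq_convex_almost_minimal_Cauchy:
  fixes S :: "nat \<Rightarrow> 'a::real_inner set"
  assumes dec: "decseq S" and convex: "\<And>n. convex (S n)" and y: "\<And>n. y n \<in> S n"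
    and d_le: "\<And>n z. z \<in> S n \<Longrightarrow> d n \<le> norm z ^ 2"
    and y_le: "\<And>n. norm (y n) ^ 2 \<le> d n + 1 / Suc n"
    and "incseq d" "d \<longlonglongrightarrow> L"
  shows "Cauchy y"
proof (rule Cauchy_if_dist_le_tendsto_0)
  define B where "B n = sqrt (2 * (L - d n) + 4 / Suc n)" for n
  show "dist (y n) (y k) \<le> B n" if "n \<le> k" for n k
  proof -
    have "y k \<in> S n" using y[of k] dec that by (auto simp: decseq_def)
    then have "norm (y n - y k) ^ 2 \<le> 2 * (norm (y n) ^ 2 - d n) + 2 * (norm (y k) ^ 2 - d n)"
      by (intro convex_norm_diff_sq_le[OF convex y] d_le)
    also have "\<dots> \<le> 2 * (L - d n) + 4 / Suc n"
      using y_le[of n] y_le[of k] incseq_le[OF \<open>incseq d\<close> \<open>d \<longlonglongrightarrow> L\<close>, of k]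
        frac_le[of 1 1 "Suc n" "Suc k"] that
      by simp
    finally show ?thesis unfolding B_def dist_norm by (simp add: real_le_rsqrt)
  qed
  have "B \<longlonglongrightarrow> sqrt (2 * (L - L) + 4 * 0)"
    unfolding B_def using \<open>d \<longlonglongrightarrow> L\<close> LIMSEQ_inverse_real_of_nat
    by (intro tendsto_intros) (simp_all add: divide_inverse)
  then show "B \<longlonglongrightarrow> 0" by simp
qed

lemma decseq_closed_convex_common_point:
  fixes S :: "nat \<Rightarrow> 'a::{real_inner,complete_space} set"
  assumes dec: "decseq S" and convex: "\<And>n. convex (S n)" and closed: "\<And>n. closed (S n)"
    and q: "\<And>n. q n \<in> S n" and q_le: "\<And>n. norm (q n) ^ 2 \<le> R"
  shows "\<exists>y. (\<forall>n. y \<in> S n) \<and> norm y ^ 2 \<le> R"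
proof -
  define d where "d n = Inf ((\<lambda>y. norm y ^ 2) ` S n)" for n
  have nonempty: "(\<lambda>y. norm y ^ 2) ` S n \<noteq> {}" for n using q[of n] by blast
  have bdd: "bdd_below ((\<lambda>y. norm y ^ 2) ` S n)" for n by (rule bdd_belowI[of _ 0]) auto
  have d_le: "d n \<le> norm y ^ 2" if "y \<in> S n" for n y
    unfolding d_def using bdd that by (intro cInf_lower) auto
  have inc: "incseq d"
    unfolding incseq_def d_def
  proof (intro allI impI cInf_superset_mono bdd nonempty)
    fix m n :: nat assume "m \<le> n"
    then show "(\<lambda>y. norm y ^ 2) ` S n \<subseteq> (\<lambda>y. norm y ^ 2) ` S m"
      using dec unfolding decseq_def by (intro image_mono) blast
  qed
  have "d n \<le> R" for n using d_le[OF q[of n]] q_le[of n] by simp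
  then have "bdd_above (range d)" by (intro bdd_aboveI) auto
  then obtain L where "d \<longlonglongrightarrow> L" using LIMSEQ_incseq_SUP[OF _ inc] by blast
  have "\<exists>y\<in>S n. norm y ^ 2 < d n + 1 / Suc n" for n
    using cInf_less_iff[OF nonempty bdd, of n "d n + 1 / Suc n"] by (simp add: d_def)
  then obtain y where y: "\<And>n. y n \<in> S n" and y_less: "\<And>n. norm (y n) ^ 2 < d n + 1 / Suc n"
    by metis
  have "Cauchy y"
    using dec convex y d_le y_less inc \<open>d \<longlonglongrightarrow> L\<close>
    by (intro decseq_convex_almost_minimal_Cauchy) (auto intro: less_imp_le)
  then obtain y0 where "y \<longlonglongrightarrow> y0" using Cauchy_convergent_iff convergent_def by blast
  have "y0 \<in> S n" for n
  proof (rule closed_sequentially[OF closed])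
    show "(\<lambda>k. y (k + n)) \<longlonglongrightarrow> y0" using \<open>y \<longlonglongrightarrow> y0\<close> by (rule LIMSEQ_ignore_initial_segment)
    show "y (k + n) \<in> S n" for k
      using y[of "k + n"] dec unfolding decseq_def by (meson le_add2 subsetD)
  qed
  moreover have "norm y0 ^ 2 \<le> R"
  proof (rule LIMSEQ_le)
    show "(\<lambda>n. norm (y n) ^ 2) \<longlonglongrightarrow> norm y0 ^ 2" using \<open>y \<longlonglongrightarrow> y0\<close> by (intro tendsto_intros)
    show "(\<lambda>n. R + 1 / Suc n) \<longlonglongrightarrow> R"
      using tendsto_add[OF tendsto_const LIMSEQ_inverse_real_of_nat, of R]
      by (simp add: divide_inverse)
    show "\<exists>N. \<forall>n\<ge>N. norm (y n) ^ 2 \<le> R + 1 / Suc n"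
      using y_less d_le[OF q] q_le by (meson less_imp_le order_trans add_right_mono)
  qed
  ultimately show ?thesis by blast
qed

section \<open>Convex absolutely homogeneous functionals\<close>

locale convex_homogeneous_functional =
  fixes J :: "'a::{real_inner,complete_space} \<Rightarrow> ereal" and p :: real
  assumes convex: "convex_fun J" and proper: "proper_fun J" and homogeneous: "abs_homogeneous p J"
begin

definition Jr :: "'a \<Rightarrow> real" where
  "Jr x = real_of_ereal (J x)"

lemma J_neq_MInfty: "J x \<noteq> -\<infinity>"
  using proper by (auto simp: proper_fun_def)

lemma J_zero: "J 0 = 0"
  using homogeneous by (simp add: abs_homogeneous_def)

lemma J_scaleR: "c \<noteq> 0 \<Longrightarrow> J (c *\<^sub>R x) = ereal (\<bar>c\<bar> powr p) * J x"
  using homogeneous by (simp add: abs_homogeneous_def)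

lemma J_convex_comb:
  "0 < t \<Longrightarrow> t < 1 \<Longrightarrow> J ((1 - t) *\<^sub>R x + t *\<^sub>R y) \<le> ereal (1 - t) * J x + ereal t * J y"
  using convex by (simp add: convex_fun_def)

lemma J_nonneg: "J x \<ge> 0"
proof -
  have "J ((1 - 1/2) *\<^sub>R x + (1/2) *\<^sub>R (- x)) \<le> ereal (1 - 1/2) * J x + ereal (1/2) * J (- x)"
    by (rule J_convex_comb) auto
  moreover have "J (- x) = J x" using J_scaleR[of "-1" x] by simp
  ultimately have "0 \<le> ereal (1/2) * J x + ereal (1/2) * J x" by (simp add: J_zero)
  also have "\<dots> = J x"
    using J_neq_MInfty[of x] by (cases "J x") (auto simp: ereal_plus_eq_PInfty)
  finally show ?thesis .
qed

lemma J_eq_ereal_Jr: "J x \<noteq> \<infinity> \<Longrightarrow> J x = ereal (Jr x)"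
  using J_neq_MInfty[of x] by (cases "J x") (auto simp: Jr_def)

lemma Jr_nonneg: "Jr x \<ge> 0"
  using J_nonneg[of x] by (cases "J x") (auto simp: Jr_def)

lemma J_scaleR_Jr: "J x \<noteq> \<infinity> \<Longrightarrow> c \<noteq> 0 \<Longrightarrow> J (c *\<^sub>R x) = ereal (\<bar>c\<bar> powr p * Jr x)"
  using J_scaleR[of c x] J_eq_ereal_Jr[of x] by simp

lemma subdiff_imp_finite:
  assumes "z \<in> subdiff J x" shows "J x = ereal (Jr x)"
proof -
  obtain y where "J y \<noteq> \<infinity>" using proper by (auto simp: proper_fun_def)
  moreover have "J x + ereal (inner z (y - x)) \<le> J y" using assms by (auto simp: subdiff_def)
  ultimately have "J x \<noteq> \<infinity>" by auto
  then show ?thesis by (rule J_eq_ereal_Jr)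
qed

lemma subgradient_inequality:
  assumes "z \<in> subdiff J x" "J v \<noteq> \<infinity>"
  shows "Jr x + inner z (v - x) \<le> Jr v"
proof -
  have "J x + ereal (inner z (v - x)) \<le> J v" using assms(1) by (auto simp: subdiff_def)
  then show ?thesis using subdiff_imp_finite[OF assms(1)] J_eq_ereal_Jr[OF assms(2)] by simp
qed

lemma subdiff_monotone:
  assumes "z1 \<in> subdiff J x1" "z2 \<in> subdiff J x2"
  shows "inner (z1 - z2) (x1 - x2) \<ge> 0"
proof -
  have "Jr x1 + inner z1 (x2 - x1) \<le> Jr x2"
    using assms by (intro subgradient_inequality) (auto dest: subdiff_imp_finite)
  moreover have "Jr x2 + inner z2 (x1 - x2) \<le> Jr x1"
    using assms by (intro subgradient_inequality) (auto dest: subdiff_imp_finite)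
  ultimately show ?thesis
    by (simp add: inner_diff_left inner_diff_right inner_commute algebra_simps)
qed

text \<open>Euler's identity for p-homogeneous functionals: compare x with its dilations c x
  and let c tend to 1 from both sides.\<close>

lemma subdiff_inner_self:
  assumes z: "z \<in> subdiff J x"
  shows "inner z x = p * Jr x"
proof -
  have fin: "J x \<noteq> \<infinity>" using subdiff_imp_finite[OF z] by simp
  define q where "q c = (c powr p - 1) / (c - 1)" for c :: real
  have dilation: "(c - 1) * inner z x \<le> (c powr p - 1) * Jr x" if "c > 0" for c
  proof -
    have "Jr x + inner z (c *\<^sub>R x - x) \<le> Jr (c *\<^sub>R x)"
      by (rule subgradient_inequality[OF z]) (use J_scaleR_Jr[OF fin] that in simp)
    moreover have "Jr (c *\<^sub>R x) = c powr p * Jr x" using J_scaleR_Jr[OF fin, of c] that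
      by (simp add: Jr_def)
    ultimately show ?thesis by (simp add: inner_diff_right algebra_simps)
  qed
  have "((\<lambda>c. c powr p) has_real_derivative p * 1 powr (p - 1)) (at 1)"
    by (rule has_real_derivative_powr) simp
  then have "(q \<longlongrightarrow> p) (at 1)"
    by (simp add: has_field_derivative_iff q_def[abs_def])
  then have lim: "((\<lambda>c. q c * Jr x) \<longlongrightarrow> p * Jr x) (at_right 1)"
    "((\<lambda>c. q c * Jr x) \<longlongrightarrow> p * Jr x) (at_left 1)"
    by (auto intro!: tendsto_intros simp: filterlim_at_split)
  have above: "inner z x \<le> q c * Jr x" if "1 < c" for c
    using dilation[of c] that by (simp add: q_def field_simps)
  have below: "q c * Jr x \<le> inner z x" if "0 < c" "c < 1" for c
    using dilation[of c] that by (simp add: q_def field_simps)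
  have "eventually (\<lambda>c. inner z x \<le> q c * Jr x) (at_right 1)"
    using eventually_at_right_less[of "1::real"] by (rule eventually_mono) (rule above)
  then have "inner z x \<le> p * Jr x"
    by (intro tendsto_le[OF trivial_limit_at_right_real lim(1) tendsto_const])
  moreover have "eventually (\<lambda>c. q c * Jr x \<le> inner z x) (at_left 1)"
    using eventually_at_left_real[of 0 "1::real"] by (rule eventually_mono) (auto intro: below)
  then have "p * Jr x \<le> inner z x"
    by (intro tendsto_le[OF trivial_limit_at_left_real tendsto_const lim(2)])
  ultimately show ?thesis by simp
qed

lemma subdiff_orthogonal_null_set:
  assumes z: "z \<in> subdiff J x" and n: "J n = 0"
  shows "inner z n = 0"
proof -
  have fin: "J x \<noteq> \<infinity>" using subdiff_imp_finite[OF z] by simp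
  define B where "B t = (1 - t) * ((1 / (1 - t)) powr p * Jr x)" for t :: real
  have one_sided: "s * inner z n \<le> 0" for s
  proof -
    have bound: "s * inner z n \<le> B t - Jr x" if t: "0 < t" "t < 1" for t
    proof -
      have "J ((s / t) *\<^sub>R n) = 0" using J_scaleR[of "s / t" n] J_zero n t by (cases "s = 0") auto
      moreover have "x + s *\<^sub>R n = (1 - t) *\<^sub>R ((1 / (1 - t)) *\<^sub>R x) + t *\<^sub>R ((s / t) *\<^sub>R n)"
        using t by simp
      ultimately have "J (x + s *\<^sub>R n) \<le> ereal (1 - t) * J ((1 / (1 - t)) *\<^sub>R x)"
        using J_convex_comb[OF t, of "(1 / (1 - t)) *\<^sub>R x" "(s / t) *\<^sub>R n"] by simp
      also have "\<dots> = ereal (B t)" using J_scaleR_Jr[OF fin, of "1 / (1 - t)"] t by (simp add: B_def)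
      finally have le: "J (x + s *\<^sub>R n) \<le> ereal (B t)" .
      then have "Jr x + inner z (x + s *\<^sub>R n - x) \<le> Jr (x + s *\<^sub>R n)"
        by (intro subgradient_inequality[OF z]) auto
      moreover have "Jr (x + s *\<^sub>R n) \<le> B t" using le J_eq_ereal_Jr[of "x + s *\<^sub>R n"] by fastforce
      ultimately show ?thesis by simp
    qed
    have "((\<lambda>t. B t - Jr x) \<longlongrightarrow> (1 - 0) * ((1 / (1 - 0)) powr p * Jr x) - Jr x) (at_right 0)"
      unfolding B_def by (intro tendsto_intros) auto
    moreover have "eventually (\<lambda>t. s * inner z n \<le> B t - Jr x) (at_right 0)"
      using eventually_at_right_real[of 0 "1::real"] by (rule eventually_mono) (auto intro: bound)
    ultimately show ?thesis
      by (intro tendsto_le[OF trivial_limit_at_right_real _ tendsto_const]) auto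
  qed
  show ?thesis using one_sided[of 1] one_sided[of "-1"] by simp
qed

section \<open>Approximate subdifferentials\<close>

text \<open>The d-subdifferential of convex analysis. It is only meaningful where J x is finite:
  otherwise Jr x is the junk value 0.\<close>

definition approx_subdiff :: "'a \<Rightarrow> real \<Rightarrow> 'a set" where
  "approx_subdiff x d = (\<Inter>v\<in>{v. J v \<noteq> \<infinity>}. {m. inner (v - x) m \<le> Jr v - Jr x + d})"

lemma mem_approx_subdiff_iff:
  "m \<in> approx_subdiff x d \<longleftrightarrow> (\<forall>v. J v \<noteq> \<infinity> \<longrightarrow> inner m (v - x) \<le> Jr v - Jr x + d)"
  by (auto simp: approx_subdiff_def inner_commute)

lemma convex_approx_subdiff: "convex (approx_subdiff x d)"
  unfolding approx_subdiff_def by (intro convex_INT convex_halfspace_le)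

lemma closed_approx_subdiff: "closed (approx_subdiff x d)"
  unfolding approx_subdiff_def by (intro closed_INT ballI closed_halfspace_le)

lemma approx_subdiff_mono: "d1 \<le> d2 \<Longrightarrow> approx_subdiff x d1 \<subseteq> approx_subdiff x d2"
  unfolding mem_approx_subdiff_iff subset_iff by (meson add_left_mono order_trans)

lemma subdiff_subset_approx_subdiff: "0 \<le> d \<Longrightarrow> subdiff J x \<subseteq> approx_subdiff x d"
  using subgradient_inequality by (fastforce simp: mem_approx_subdiff_iff)

lemma INT_approx_subdiff_subset_subdiff:
  assumes fin: "J x \<noteq> \<infinity>" and m: "\<And>n::nat. m \<in> approx_subdiff x (1 / Suc n)"
  shows "m \<in> subdiff J x"
  unfolding subdiff_def
proof (intro CollectI allI)
  fix v
  show "J x + ereal (inner m (v - x)) \<le> J v"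
  proof (cases "J v = \<infinity>")
    case False
    have le: "inner m (v - x) \<le> Jr v - Jr x + 1 / Suc n" for n
      using m[of n] False by (auto simp: mem_approx_subdiff_iff)
    have "inner m (v - x) \<le> Jr v - Jr x"
    proof (rule ccontr)
      assume "\<not> ?thesis"
      then obtain n where "inverse (real (Suc n)) < inner m (v - x) - (Jr v - Jr x)"
        using reals_Archimedean[of "inner m (v - x) - (Jr v - Jr x)"] by auto
      then show False using le[of n] by (simp add: divide_inverse)
    qed
    then show ?thesis using J_eq_ereal_Jr[OF fin] J_eq_ereal_Jr[OF False] by simp
  qed simp
qed

text \<open>Midpoints of far-away elements would have strictly smaller norm than z0 and, by
  completeness, produce a subgradient of smaller norm.\<close>

lemma approx_subdiff_near_min_norm_subgrad:
  assumes min: "min_norm_subgrad J x z0" and "e > 0"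
  shows "\<exists>d>0. \<forall>m\<in>approx_subdiff x d. norm m \<le> norm z0 \<longrightarrow> norm (m - z0) \<le> e"
proof (rule ccontr)
  assume "\<not> ?thesis"
  then have "\<forall>n::nat. \<exists>m. m \<in> approx_subdiff x (1 / Suc n) \<and> norm m \<le> norm z0 \<and> e < norm (m - z0)"
    by (metis not_le of_nat_0_less_iff zero_less_Suc zero_less_divide_1_iff)
  then obtain m where m: "\<And>n. m n \<in> approx_subdiff x (1 / Suc n)"
    and m_le: "\<And>n. norm (m n) \<le> norm z0" and m_far: "\<And>n. e < norm (m n - z0)"
    by metis
  have z0: "z0 \<in> subdiff J x" using min by (simp add: min_norm_subgrad_def)
  define mid where "mid n = (1/2) *\<^sub>R m n + (1/2) *\<^sub>R z0" for n
  have mid_in: "mid n \<in> approx_subdiff x (1 / Suc n)" for n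
    using convex_approx_subdiff m[of n] subdiff_subset_approx_subdiff[of "1 / Suc n"] z0
    unfolding convex_def mid_def by fastforce
  have mid_le: "norm (mid n) ^ 2 \<le> norm z0 ^ 2 - e^2 / 4" for n
  proof -
    have "norm (mid n) ^ 2 = norm (m n + z0) ^ 2 / 4"
      by (simp add: mid_def scaleR_add_right[symmetric] power_divide)
    moreover have "norm (m n) ^ 2 \<le> norm z0 ^ 2" using m_le[of n] by (simp add: power_mono)
    moreover have "e ^ 2 < norm (m n - z0) ^ 2" using m_far[of n] \<open>e > 0\<close>
      by (simp add: power_strict_mono)
    ultimately show ?thesis using parallelogram_law[of "m n" z0] by linarith
  qed
  have "decseq (\<lambda>n. approx_subdiff x (1 / Suc n))"
    by (rule decseq_SucI, rule approx_subdiff_mono) (simp add: frac_le)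
  then obtain y where y: "\<And>n. y \<in> approx_subdiff x (1 / Suc n)"
    and y_le: "norm y ^ 2 \<le> norm z0 ^ 2 - e^2 / 4"
    using decseq_closed_convex_common_point[where S = "\<lambda>n. approx_subdiff x (1 / Suc n)" and q = mid]
      convex_approx_subdiff closed_approx_subdiff mid_in mid_le
    by blast
  have "y \<in> subdiff J x"
    by (rule INT_approx_subdiff_subset_subdiff[OF _ y]) (use subdiff_imp_finite[OF z0] in simp)
  then have "norm z0 \<le> norm y" using min by (simp add: min_norm_subgrad_def)
  then have "norm z0 ^ 2 \<le> norm y ^ 2" by (simp add: power_mono)
  moreover have "e ^ 2 / 4 > 0" using \<open>e > 0\<close> by simp
  ultimately show False using y_le by linarith
qed

lemma tendsto_min_norm_subgrad:
  assumes min: "min_norm_subgrad J x z0"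
    and approx: "\<And>d. d > 0 \<Longrightarrow> eventually (\<lambda>s. m s \<in> approx_subdiff x d) F"
    and norm_le: "eventually (\<lambda>s. norm (m s) \<le> norm z0) F"
  shows "(m \<longlongrightarrow> z0) F"
proof (rule tendstoI)
  fix e :: real assume "e > 0"
  then obtain d where "d > 0"
    and near: "\<And>m. m \<in> approx_subdiff x d \<Longrightarrow> norm m \<le> norm z0 \<Longrightarrow> norm (m - z0) \<le> e / 2"
    using approx_subdiff_near_min_norm_subgrad[OF min, of "e / 2"] by auto
  show "eventually (\<lambda>s. dist (m s) z0 < e) F"
    using approx[OF \<open>d > 0\<close>] norm_le
  proof eventually_elim
    case (elim s)
    then have "norm (m s - z0) \<le> e / 2" by (rule near)
    then show ?case using \<open>e > 0\<close> by (simp add: dist_norm)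
  qed
qed

end

section \<open>Difference quotients\<close>

lemma has_vector_derivative_imp_tendsto_quotient:
  fixes f :: "real \<Rightarrow> 'b::real_normed_vector"
  assumes "(f has_vector_derivative v) (at x within S)"
  shows "((\<lambda>y. (f y - f x) /\<^sub>R (y - x)) \<longlongrightarrow> v) (at x within S)"
proof -
  have "((\<lambda>y. norm ((f y - f x) - (y - x) *\<^sub>R v) / norm (y - x)) \<longlongrightarrow> 0) (at x within S)"
    using assms unfolding has_vector_derivative_def has_derivative_iff_norm by blast
  moreover have "eventually (\<lambda>y. norm ((f y - f x) - (y - x) *\<^sub>R v) / norm (y - x) =
      norm ((f y - f x) /\<^sub>R (y - x) - v)) (at x within S)"
    unfolding eventually_at_filter
  proof (intro always_eventually allI impI)
    fix y :: real assume "y \<noteq> x"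
    then have "(f y - f x) /\<^sub>R (y - x) - v = (1 / (y - x)) *\<^sub>R ((f y - f x) - (y - x) *\<^sub>R v)"
      by (simp add: scaleR_diff_right divide_inverse)
    then show "norm ((f y - f x) - (y - x) *\<^sub>R v) / norm (y - x) = norm ((f y - f x) /\<^sub>R (y - x) - v)"
      by (simp add: divide_inverse mult.commute)
  qed
  ultimately have "((\<lambda>y. norm ((f y - f x) /\<^sub>R (y - x) - v)) \<longlongrightarrow> 0) (at x within S)"
    by (rule Lim_transform_eventually)
  then show ?thesis by (simp only: tendsto_norm_zero_iff LIM_zero_iff)
qed

lemma tendsto_quotient_at_right_shift:
  fixes u :: "real \<Rightarrow> 'b::real_normed_vector"
  assumes "((\<lambda>y. (u y - u (x + h)) /\<^sub>R (y - (x + h))) \<longlongrightarrow> v) (at_right (x + h))"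
  shows "((\<lambda>y. (u (y + h) - u (x + h)) /\<^sub>R (y - x)) \<longlongrightarrow> v) (at_right x)"
proof -
  have "filtermap (\<lambda>y. y + h) (at_right x) = at_right (x + h)"
    using filtermap_at_right_shift[of "-h" x] by simp
  then have "(((\<lambda>y. (u y - u (x + h)) /\<^sub>R (y - (x + h))) \<circ> (\<lambda>y. y + h)) \<longlongrightarrow> v) (at_right x)"
    unfolding tendsto_compose_filtermap using assms by simp
  then show ?thesis by (simp add: o_def)
qed

lemma has_real_derivative_at_right_iff_quotient:
  fixes f :: "real \<Rightarrow> real"
  shows "(f has_real_derivative d) (at_right x) \<longleftrightarrow>
    ((\<lambda>y. (f y - f x) /\<^sub>R (y - x)) \<longlongrightarrow> d) (at_right x)"
  by (simp add: has_field_derivative_iff divide_inverse mult.commute)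

lemma tendsto_quotient_inner:
  fixes f g :: "real \<Rightarrow> 'b::real_inner"
  assumes "((\<lambda>y. (f y - f x) /\<^sub>R (y - x)) \<longlongrightarrow> a) F"
    and "((\<lambda>y. (g y - g x) /\<^sub>R (y - x)) \<longlongrightarrow> b) F"
    and "(g \<longlongrightarrow> g x) F"
  shows "((\<lambda>y. (inner (f y) (g y) - inner (f x) (g x)) /\<^sub>R (y - x)) \<longlongrightarrow>
    inner a (g x) + inner (f x) b) F"
proof -
  have "(inner (f y) (g y) - inner (f x) (g x)) /\<^sub>R (y - x) =
      inner ((f y - f x) /\<^sub>R (y - x)) (g y) + inner (f x) ((g y - g x) /\<^sub>R (y - x))" for y
    by (simp add: inner_diff_left inner_diff_right divide_inverse algebra_simps)
  then show ?thesis by (simp only:) (intro tendsto_intros assms)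
qed

lemma norm_powr_eq_inner_powr:
  fixes x :: "'a::real_inner"
  shows "norm x powr a = inner x x powr (a / 2)"
proof (cases "x = 0")
  case False
  then have "inner x x powr (a / 2) = (norm x powr 2) powr (a / 2)"
    by (subst powr_numeral) (auto simp: power2_norm_eq_inner)
  also have "\<dots> = norm x powr a" by (simp only: powr_powr) simp
  finally show ?thesis by simp
qed simp

section \<open>The gradient flow\<close>

locale homogeneous_gradient_flow = convex_homogeneous_functional J p
  for J :: "'a::{real_inner,complete_space} \<Rightarrow> ereal" and p :: real +
  fixes f :: 'a and u :: "real \<Rightarrow> 'a"
  assumes flow: "gradient_flow J f u" and p_pos: "0 < p"
begin

definition zeta :: "real \<Rightarrow> 'a" where
  "zeta t = (SOME \<zeta>. min_norm_subgrad J (u t) \<zeta> \<and> (u has_vector_derivative - \<zeta>) (at t within {t..}))"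

lemma zeta_spec:
  assumes "t > 0"
  shows "min_norm_subgrad J (u t) (zeta t)" "(u has_vector_derivative - zeta t) (at t within {t..})"
proof -
  have "\<exists>\<zeta>. min_norm_subgrad J (u t) \<zeta> \<and> (u has_vector_derivative - \<zeta>) (at t within {t..})"
    using flow assms unfolding gradient_flow_def by blast
  then show "min_norm_subgrad J (u t) (zeta t)" "(u has_vector_derivative - zeta t) (at t within {t..})"
    unfolding zeta_def by (metis (mono_tags, lifting) someI_ex)+
qed

lemma zeta_in_subdiff: "t > 0 \<Longrightarrow> zeta t \<in> subdiff J (u t)"
  using zeta_spec(1) by (simp add: min_norm_subgrad_def)

lemma u_right_quotient: "t > 0 \<Longrightarrow> ((\<lambda>s. (u s - u t) /\<^sub>R (s - t)) \<longlongrightarrow> - zeta t) (at_right t)"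
  using has_vector_derivative_imp_tendsto_quotient[OF zeta_spec(2)]
  by (simp add: at_within_Ici_at_right)

lemma u_0: "u 0 = f"
  using flow by (simp add: gradient_flow_def)

lemma continuous_on_u: "continuous_on {0..} u"
  using flow by (simp add: gradient_flow_def)

lemma continuous_on_u_Icc: "0 \<le> a \<Longrightarrow> continuous_on {a..b} u"
  using continuous_on_u by (rule continuous_on_subset) auto

lemma u_tendsto_at_right:
  assumes "t \<ge> 0" shows "(u \<longlongrightarrow> u t) (at_right t)"
proof -
  have "(u \<longlongrightarrow> u t) (at t within {0..})" using continuous_on_u assms by (simp add: continuous_on_def)
  moreover have "at_right t \<le> at t within {0..}" by (rule at_le) (use assms in auto)
  ultimately show ?thesis by (rule tendsto_mono[rotated])
qed

lemma isCont_u: "t > 0 \<Longrightarrow> isCont u t"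
  using continuous_on_subset[OF continuous_on_u, of "{0<..}"]
  by (simp add: continuous_on_eq_continuous_at subset_eq)

definition Ju :: "real \<Rightarrow> real" where
  "Ju t = Jr (u t)"

lemma J_u_eq: "t > 0 \<Longrightarrow> J (u t) = ereal (Ju t)"
  using subdiff_imp_finite[OF zeta_in_subdiff] by (simp add: Ju_def)

lemma Ju_subgradient_inequality: "t > 0 \<Longrightarrow> s > 0 \<Longrightarrow> Ju t + inner (zeta t) (u s - u t) \<le> Ju s"
  using subgradient_inequality[OF zeta_in_subdiff] J_u_eq[of s] by (simp add: Ju_def)

lemma Ju_nonneg: "Ju t \<ge> 0"
  by (simp add: Ju_def Jr_nonneg)

text \<open>The right derivative of the squared distance of u from its time shift is non-positive
  by monotonicity of the subdifferential.\<close>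

lemma increment_contraction:
  assumes "h > 0" "0 < t" "t \<le> s"
  shows "norm (u (s + h) - u s) \<le> norm (u (t + h) - u t)"
proof -
  define D where "D y = u (y + h) - u y" for y
  have "inner (D s) (D s) \<le> inner (D t) (D t)"
  proof (rule right_DERIV_nonpos_imp_nonincreasing
      [where a = t and b = s and f = "\<lambda>y. inner (D y) (D y)"
        and f' = "\<lambda>y. inner (zeta y - zeta (y + h)) (D y) + inner (D y) (zeta y - zeta (y + h))"])
    have "continuous_on {t..s} (\<lambda>y. u (y + h))"
      using assms by (intro continuous_on_compose2[OF continuous_on_u] continuous_intros) auto
    then show "continuous_on {t..s} (\<lambda>y. inner (D y) (D y))"
      unfolding D_def using continuous_on_u_Icc[of t s] assms by (intro continuous_intros) auto
  next
    fix y assume y: "t < y" "y < s"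
    have "((\<lambda>x. (u (x + h) - u (y + h)) /\<^sub>R (x - y)) \<longlongrightarrow> - zeta (y + h)) (at_right y)"
      by (rule tendsto_quotient_at_right_shift, rule u_right_quotient) (use y assms in simp)
    from tendsto_diff[OF this u_right_quotient[of y]]
    have quotient: "((\<lambda>x. (D x - D y) /\<^sub>R (x - y)) \<longlongrightarrow> zeta y - zeta (y + h)) (at_right y)"
      using y assms by (simp add: D_def algebra_simps scaleR_diff_right)
    have "((\<lambda>x. u (x + h)) \<longlongrightarrow> u (y + h)) (at_right y)"
      using tendsto_compose_filtermap[of u "\<lambda>x. x + h"] filtermap_at_right_shift[of "-h" y]
        u_tendsto_at_right[of "y + h"] y assms by (simp add: o_def)
    then have "(D \<longlongrightarrow> D y) (at_right y)"
      unfolding D_def using u_tendsto_at_right[of y] y assms by (intro tendsto_intros) auto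
    then show "((\<lambda>y. inner (D y) (D y)) has_real_derivative
        inner (zeta y - zeta (y + h)) (D y) + inner (D y) (zeta y - zeta (y + h))) (at_right y)"
      unfolding has_real_derivative_at_right_iff_quotient
      by (rule tendsto_quotient_inner[OF quotient quotient])
    have "inner (zeta (y + h) - zeta y) (u (y + h) - u y) \<ge> 0"
      using y assms by (intro subdiff_monotone zeta_in_subdiff) auto
    then show "inner (zeta y - zeta (y + h)) (D y) + inner (D y) (zeta y - zeta (y + h)) \<le> 0"
      by (simp add: D_def inner_commute inner_diff_left inner_diff_right)
  qed (use assms in simp)
  then show ?thesis by (simp add: D_def power2_norm_eq_inner[symmetric] power2_le_iff_abs_le)
qed

lemma norm_zeta_antimono:
  assumes "0 < t" "t \<le> s"
  shows "norm (zeta s) \<le> norm (zeta t)"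
proof -
  have quotient: "((\<lambda>h. norm ((u (r + h) - u r) /\<^sub>R h)) \<longlongrightarrow> norm (zeta r)) (at_right 0)"
    if "r > 0" for r
  proof -
    have "((\<lambda>h. (u (r + h) - u r) /\<^sub>R h) \<longlongrightarrow> - zeta r) (at_right 0)"
      using tendsto_quotient_at_right_shift[where u = u and x = 0 and h = r] u_right_quotient[OF that]
      by (simp add: add.commute)
    from tendsto_norm[OF this] show ?thesis by simp
  qed
  have "eventually (\<lambda>h. norm ((u (s + h) - u s) /\<^sub>R h) \<le> norm ((u (t + h) - u t) /\<^sub>R h)) (at_right 0)"
    using eventually_at_right_less[of "0::real"]
    by (rule eventually_mono) (use increment_contraction assms in \<open>simp add: divide_right_mono\<close>)
  then show ?thesis
    using assms by (intro tendsto_le[OF trivial_limit_at_right_real quotient quotient]) auto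
qed

lemma Ju_diff_le:
  assumes "0 < a" "a \<le> t" "a \<le> s"
  shows "\<bar>Ju s - Ju t\<bar> \<le> norm (zeta a) * norm (u s - u t)"
proof -
  have bound: "\<bar>inner (zeta r) (u s - u t)\<bar> \<le> norm (zeta a) * norm (u s - u t)" if "a \<le> r" for r
  proof -
    have "norm (zeta r) \<le> norm (zeta a)" using norm_zeta_antimono[of a r] that assms by simp
    then show ?thesis using Cauchy_Schwarz_ineq2[of "zeta r" "u s - u t"]
      by (meson mult_right_mono norm_ge_zero order_trans)
  qed
  have "Ju t + inner (zeta t) (u s - u t) \<le> Ju s" "Ju s - inner (zeta s) (u s - u t) \<le> Ju t"
    using Ju_subgradient_inequality[of t s] Ju_subgradient_inequality[of s t] assms
    by (auto simp: inner_diff_right)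
  then show ?thesis using bound[of s] bound[of t] assms by linarith
qed

lemma isCont_Ju:
  assumes "t > 0" shows "isCont Ju t"
proof -
  have "((\<lambda>s. Ju s - Ju t) \<longlongrightarrow> 0) (at t)"
  proof (rule Lim_null_comparison)
    have "eventually (\<lambda>s. s > t / 2) (at t)"
      using assms by (intro order_tendstoD(1)[OF tendsto_ident_at]) simp
    then show "eventually (\<lambda>s. norm (Ju s - Ju t) \<le> norm (zeta (t/2)) * norm (u s - u t)) (at t)"
      by (rule eventually_mono) (use Ju_diff_le[of "t/2" t] assms in simp)
    have "((\<lambda>s. u s - u t) \<longlongrightarrow> 0) (at t)"
      using isCont_u[OF assms] by (simp add: isCont_def LIM_zero_iff)
    then show "((\<lambda>s. norm (zeta (t/2)) * norm (u s - u t)) \<longlongrightarrow> 0) (at t)"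
      by (metis mult_zero_right tendsto_mult_left tendsto_norm_zero)
  qed
  then show ?thesis by (simp add: isCont_def LIM_zero_iff)
qed

lemma continuous_on_Ju: "0 < a \<Longrightarrow> continuous_on {a..b} Ju"
  using isCont_Ju by (intro continuous_at_imp_continuous_on) auto

text \<open>For s close to t from the right, zeta s is an approximate subgradient at u t and not
  longer than zeta t.\<close>

lemma zeta_tendsto_at_right:
  assumes "t > 0"
  shows "(zeta \<longlongrightarrow> zeta t) (at_right t)"
proof (rule tendsto_min_norm_subgrad[OF zeta_spec(1)[OF assms]])
  show "eventually (\<lambda>s. norm (zeta s) \<le> norm (zeta t)) (at_right t)"
    using eventually_at_right_less[of t]
    by (rule eventually_mono) (use norm_zeta_antimono assms in auto)
next
  fix d :: real assume "d > 0"
  define c where "c = d / (2 * norm (zeta t) + 1)"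
  have "c > 0" using \<open>d > 0\<close> by (simp add: c_def add_nonneg_pos)
  have "2 * norm (zeta t) * c \<le> (2 * norm (zeta t) + 1) * c" using \<open>c > 0\<close> by simp
  also have "\<dots> = d"
    using add_nonneg_pos[of "2 * norm (zeta t)" 1] by (simp add: c_def)
  finally have c_le: "2 * norm (zeta t) * c \<le> d" .
  have "eventually (\<lambda>s. dist (u s) (u t) < c) (at_right t)"
    using u_tendsto_at_right[of t] assms \<open>c > 0\<close> by (simp add: tendsto_iff)
  then show "eventually (\<lambda>s. zeta s \<in> approx_subdiff (u t) d) (at_right t)"
    using eventually_at_right_less[of t]
  proof eventually_elim
    case (elim s)
    then have close: "norm (zeta t) * norm (u s - u t) \<le> norm (zeta t) * c"
      by (simp add: dist_norm mult_left_mono)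
    have "\<bar>Ju s - Ju t\<bar> \<le> norm (zeta t) * norm (u s - u t)"
      using Ju_diff_le[of t t s] elim assms by simp
    moreover have "inner (zeta s) (u s - u t) \<le> norm (zeta t) * norm (u s - u t)"
      using norm_cauchy_schwarz[of "zeta s" "u s - u t"] norm_zeta_antimono[of t s] elim assms
      by (meson mult_right_mono norm_ge_zero order_trans less_imp_le)
    ultimately have "\<bar>Ju s - Ju t\<bar> + inner (zeta s) (u s - u t) \<le> d"
      using close c_le by linarith
    show ?case unfolding mem_approx_subdiff_iff
    proof (intro allI impI)
      fix v assume "J v \<noteq> \<infinity>"
      have "Ju s + inner (zeta s) (v - u s) \<le> Jr v"
        using subgradient_inequality[OF zeta_in_subdiff \<open>J v \<noteq> \<infinity>\<close>] elim assms by (simp add: Ju_def)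
      moreover have "inner (zeta s) (v - u t) = inner (zeta s) (v - u s) + inner (zeta s) (u s - u t)"
        by (simp add: inner_diff_right)
      ultimately show "inner (zeta s) (v - u t) \<le> Jr v - Jr (u t) + d"
        using \<open>\<bar>Ju s - Ju t\<bar> + inner (zeta s) (u s - u t) \<le> d\<close> unfolding Ju_def by linarith
    qed
  qed
qed

lemma Ju_right_derivative:
  assumes "t > 0"
  shows "(Ju has_real_derivative (- (norm (zeta t) ^ 2))) (at_right t)"
proof -
  define Q where "Q s = (u s - u t) /\<^sub>R (s - t)" for s
  have Q: "(Q \<longlongrightarrow> - zeta t) (at_right t)" unfolding Q_def by (rule u_right_quotient[OF assms])
  have lower: "((\<lambda>s. inner (zeta t) (Q s)) \<longlongrightarrow> - (norm (zeta t) ^ 2)) (at_right t)"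
    using Q by (auto intro!: tendsto_eq_intros simp: power2_norm_eq_inner)
  have upper: "((\<lambda>s. inner (zeta s) (Q s)) \<longlongrightarrow> - (norm (zeta t) ^ 2)) (at_right t)"
    using Q zeta_tendsto_at_right[OF assms]
    by (auto intro!: tendsto_eq_intros simp: power2_norm_eq_inner)
  have "((\<lambda>s. (Ju s - Ju t) /\<^sub>R (s - t)) \<longlongrightarrow> - (norm (zeta t) ^ 2)) (at_right t)"
  proof (rule tendsto_sandwich[OF _ _ lower upper])
    show "eventually (\<lambda>s. inner (zeta t) (Q s) \<le> (Ju s - Ju t) /\<^sub>R (s - t)) (at_right t)"
      using eventually_at_right_less[of t]
    proof (rule eventually_mono)
      fix s assume "s > t"
      then have "inner (zeta t) (u s - u t) / (s - t) \<le> (Ju s - Ju t) / (s - t)"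
        using Ju_subgradient_inequality[of t s] assms by (intro divide_right_mono) auto
      then show "inner (zeta t) (Q s) \<le> (Ju s - Ju t) /\<^sub>R (s - t)"
        by (simp add: Q_def divide_inverse mult.commute)
    qed
    show "eventually (\<lambda>s. (Ju s - Ju t) /\<^sub>R (s - t) \<le> inner (zeta s) (Q s)) (at_right t)"
      using eventually_at_right_less[of t]
    proof (rule eventually_mono)
      fix s assume "s > t"
      then have "(Ju s - Ju t) / (s - t) \<le> inner (zeta s) (u s - u t) / (s - t)"
        using Ju_subgradient_inequality[of s t] assms
        by (intro divide_right_mono) (auto simp: inner_diff_right)
      then show "(Ju s - Ju t) /\<^sub>R (s - t) \<le> inner (zeta s) (Q s)"
        by (simp add: Q_def divide_inverse mult.commute)
    qed
  qed
  then show ?thesis by (simp add: has_real_derivative_at_right_iff_quotient)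
qed

lemma norm_sq_right_derivative:
  assumes "t > 0"
  shows "((\<lambda>s. inner (u s) (u s)) has_real_derivative (- 2 * p * Ju t)) (at_right t)"
proof -
  have "((\<lambda>s. (inner (u s) (u s) - inner (u t) (u t)) /\<^sub>R (s - t)) \<longlongrightarrow>
      inner (- zeta t) (u t) + inner (u t) (- zeta t)) (at_right t)"
    using assms by (intro tendsto_quotient_inner u_right_quotient u_tendsto_at_right) auto
  moreover have "inner (- zeta t) (u t) + inner (u t) (- zeta t) = - 2 * p * Ju t"
    using subdiff_inner_self[OF zeta_in_subdiff[OF assms]] by (simp add: inner_commute Ju_def)
  ultimately show ?thesis by (simp add: has_real_derivative_at_right_iff_quotient)
qed

lemma inner_null_set_conserved:
  assumes "J n = 0" "t \<ge> 0"
  shows "inner (u t) n = inner f n"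
proof -
  have cont: "continuous_on {0..t} (\<lambda>s. inner (u s) n)"
    using continuous_on_u_Icc[of 0 t] by (auto intro!: continuous_intros)
  have der: "((\<lambda>s. inner (u s) n) has_real_derivative 0) (at_right s)" if "0 < s" for s
  proof -
    have "((\<lambda>y. (inner (u y) n - inner (u s) n) /\<^sub>R (y - s)) \<longlongrightarrow>
        inner (- zeta s) n + inner (u s) 0) (at_right s)"
      by (rule tendsto_quotient_inner[where g = "\<lambda>_. n", OF u_right_quotient[OF that]]) auto
    then show ?thesis
      using subdiff_orthogonal_null_set[OF zeta_in_subdiff[OF that] assms(1)]
      by (simp add: has_real_derivative_at_right_iff_quotient)
  qed
  have "inner (u t) n \<le> inner (u 0) n" "inner (u 0) n \<le> inner (u t) n"
    using right_DERIV_nonpos_imp_nonincreasing[OF assms(2) cont der]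
      right_DERIV_nonneg_imp_nondecreasing[OF assms(2) cont der] by auto
  then show ?thesis using u_0 by simp
qed

lemma norm_u_antimono:
  assumes "0 \<le> t" "t \<le> s"
  shows "norm (u s) \<le> norm (u t)"
proof -
  have "inner (u s) (u s) \<le> inner (u t) (u t)"
  proof (rule right_DERIV_nonpos_imp_nonincreasing[OF assms(2) _ norm_sq_right_derivative])
    show "continuous_on {t..s} (\<lambda>s. inner (u s) (u s))"
      using continuous_on_u_Icc[of t s] assms by (auto intro!: continuous_intros)
    show "- 2 * p * Ju x \<le> 0" for x using p_pos Ju_nonneg[of x] by simp
  qed (use assms in auto)
  then show ?thesis by (simp add: power2_norm_eq_inner[symmetric] power2_le_iff_abs_le)
qed

lemma Ju_antimono:
  assumes "0 < t" "t \<le> s"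
  shows "Ju s \<le> Ju t"
  using assms
  by (intro right_DERIV_nonpos_imp_nonincreasing[OF _ continuous_on_Ju Ju_right_derivative]) auto

section \<open>The Rayleigh quotient along the flow\<close>

definition rayleigh :: "real \<Rightarrow> real" where
  "rayleigh t = p * Ju t / norm (u t) powr p"

lemma rayleigh_eq: "rayleigh t = p * Ju t * inner (u t) (u t) powr (- p / 2)"
  by (simp add: rayleigh_def norm_powr_eq_inner_powr powr_minus_divide)

lemma rayleigh_right_derivative:
  assumes "t > 0" "u t \<noteq> 0"
  shows "(rayleigh has_real_derivative p * inner (u t) (u t) powr (- p / 2 - 1)
    * ((p * Ju t) ^ 2 - norm (zeta t) ^ 2 * inner (u t) (u t))) (at_right t)"
proof -
  define N where "N = inner (u t) (u t)"
  have "N > 0" using assms by (simp add: N_def)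
  have "((\<lambda>s. inner (u s) (u s) powr (- p / 2)) has_real_derivative
      (- p / 2 * N powr (- p / 2 - 1)) * (- 2 * p * Ju t)) (at_right t)"
    unfolding N_def
    by (rule DERIV_chain2[OF has_real_derivative_powr norm_sq_right_derivative[OF assms(1)]])
      (use \<open>N > 0\<close> in \<open>simp_all add: N_def\<close>)
  from DERIV_mult[OF DERIV_cmult[OF Ju_right_derivative[OF assms(1)], of p] this]
  have "((\<lambda>s. p * Ju s * inner (u s) (u s) powr (- p / 2)) has_real_derivative
      p * (- (norm (zeta t) ^ 2)) * N powr (- p / 2)
      + p * Ju t * (- p / 2 * N powr (- p / 2 - 1) * (- 2 * p * Ju t))) (at_right t)"
    by (rule DERIV_cong) (simp add: N_def algebra_simps)
  moreover have "N powr (- p / 2) = N powr (- p / 2 - 1) * N"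
  proof -
    have "N powr (- p / 2 - 1) * N = N powr (- p / 2 - 1) * N powr 1" using \<open>N > 0\<close> by simp
    also have "\<dots> = N powr (- p / 2)" by (simp only: powr_add[symmetric]) simp
    finally show ?thesis by simp
  qed
  ultimately show ?thesis
    unfolding rayleigh_eq[abs_def] N_def[symmetric] by (simp add: algebra_simps power2_eq_square)
qed

text \<open>By Euler's identity and Cauchy-Schwarz,
  (p Ju t)^2 = <zeta t, u t>^2 <= |zeta t|^2 |u t|^2.\<close>

lemma rayleigh_right_derivative_nonpos:
  assumes "t > 0"
  shows "p * inner (u t) (u t) powr (- p / 2 - 1)
    * ((p * Ju t) ^ 2 - norm (zeta t) ^ 2 * inner (u t) (u t)) \<le> 0"
proof -
  have "(p * Ju t) ^ 2 \<le> norm (zeta t) ^ 2 * inner (u t) (u t)"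
    using Cauchy_Schwarz_ineq[of "zeta t" "u t"] subdiff_inner_self[OF zeta_in_subdiff[OF assms]]
    by (simp add: Ju_def power2_norm_eq_inner)
  then show ?thesis using p_pos by (simp add: mult_nonneg_nonpos)
qed

lemma continuous_on_rayleigh:
  assumes "a > 0" and nonzero: "\<And>s. a \<le> s \<Longrightarrow> s \<le> b \<Longrightarrow> u s \<noteq> 0"
  shows "continuous_on {a..b} rayleigh"
  unfolding rayleigh_def[abs_def] using continuous_on_Ju[of a b] continuous_on_u_Icc[of a b] assms
  by (intro continuous_intros continuous_on_powr') auto

lemma rayleigh_antimono:
  assumes "0 < t" "t \<le> s" "u s \<noteq> 0"
  shows "rayleigh s \<le> rayleigh t"
proof -
  have nonzero: "u y \<noteq> 0" if "t \<le> y" "y \<le> s" for y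
    using norm_u_antimono[of y s] that assms by auto
  show ?thesis
  proof (rule right_DERIV_nonpos_imp_nonincreasing[OF assms(2) continuous_on_rayleigh, where f' =
        "\<lambda>y. p * inner (u y) (u y) powr (- p / 2 - 1)
          * ((p * Ju y) ^ 2 - norm (zeta y) ^ 2 * inner (u y) (u y))"])
    fix y assume "t < y" "y < s"
    then have "0 < y" "u y \<noteq> 0" using assms nonzero by auto
    then show "(rayleigh has_real_derivative p * inner (u y) (u y) powr (- p / 2 - 1)
        * ((p * Ju y) ^ 2 - norm (zeta y) ^ 2 * inner (u y) (u y))) (at_right y)"
      by (rule rayleigh_right_derivative)
    show "p * inner (u y) (u y) powr (- p / 2 - 1)
        * ((p * Ju y) ^ 2 - norm (zeta y) ^ 2 * inner (u y) (u y)) \<le> 0"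
      using \<open>0 < y\<close> by (rule rayleigh_right_derivative_nonpos)
  qed (use assms nonzero in auto)
qed

lemma time_weighted_Ju_le:
  assumes "t > 0"
  shows "t * Ju t \<le> (norm f ^ 2 - norm (u t) ^ 2) / (2 * p)"
proof -
  define F where "F s = inner (u s) (u s) + 2 * p * Ju t * s" for s
  have "F t \<le> F 0"
  proof (rule right_DERIV_nonpos_imp_nonincreasing
      [where a = 0 and b = t and f = F and f' = "\<lambda>s. - 2 * p * Ju s + 2 * p * Ju t"])
    show "continuous_on {0..t} F"
      unfolding F_def[abs_def] using continuous_on_u_Icc[of 0 t] by (auto intro!: continuous_intros)
    show "(F has_real_derivative - 2 * p * Ju x + 2 * p * Ju t) (at_right x)" if "0 < x" "x < t" for x
      unfolding F_def
      using DERIV_add[OF norm_sq_right_derivative[OF that(1)]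
          DERIV_cmult[OF DERIV_ident, of "2 * p * Ju t"]]
      by simp
    show "- 2 * p * Ju x + 2 * p * Ju t \<le> 0" if "0 < x" "x < t" for x
      using Ju_antimono[of x t] that p_pos by simp
  qed (use assms in simp)
  then have "norm (u t) ^ 2 + 2 * p * (t * Ju t) \<le> norm f ^ 2"
    by (simp add: F_def u_0 power2_norm_eq_inner algebra_simps)
  then show ?thesis using p_pos by (simp add: field_simps)
qed

lemma time_weighted_Ju_tendsto_0: "((\<lambda>s. s * Ju s) \<longlongrightarrow> 0) (at_right 0)"
proof (rule tendsto_sandwich[where f = "\<lambda>_. 0" and h = "\<lambda>s. (norm f ^ 2 - norm (u s) ^ 2) / (2 * p)"])
  show "eventually (\<lambda>s. 0 \<le> s * Ju s) (at_right 0)"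
    using eventually_at_right_less[of "0::real"] by (rule eventually_mono) (simp add: Ju_nonneg)
  show "eventually (\<lambda>s. s * Ju s \<le> (norm f ^ 2 - norm (u s) ^ 2) / (2 * p)) (at_right 0)"
    using eventually_at_right_less[of "0::real"]
    by (rule eventually_mono) (rule time_weighted_Ju_le)
  have "((\<lambda>s. (norm f ^ 2 - norm (u s) ^ 2) / (2 * p)) \<longlongrightarrow> (norm f ^ 2 - norm (u 0) ^ 2) / (2 * p))
      (at_right 0)"
    using u_tendsto_at_right[of 0] p_pos by (intro tendsto_intros) auto
  then show "((\<lambda>s. (norm f ^ 2 - norm (u s) ^ 2) / (2 * p)) \<longlongrightarrow> 0) (at_right 0)"
    by (simp add: u_0)
qed simp

text \<open>The right derivative is non-positive by the subgradient inequality between u s and f.\<close>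

lemma weighted_energy_gap_antimono:
  assumes J_f: "J f = ereal j" and "0 < r" "r \<le> t"
  shows "t * (Ju t - j) + inner (u t - f) (u t - f) / 2 \<le>
    r * (Ju r - j) + inner (u r - f) (u r - f) / 2"
proof -
  define H where "H s = s * (Ju s - j) + inner (u s - f) (u s - f) / 2" for s
  have "H t \<le> H r"
  proof (rule right_DERIV_nonpos_imp_nonincreasing
      [where a = r and b = t and f = H
        and f' = "\<lambda>s. (Ju s - j) - s * norm (zeta s) ^ 2 + inner (- zeta s) (u s - f)"])
    show "continuous_on {r..t} H" unfolding H_def[abs_def]
      using continuous_on_Ju[of r t] continuous_on_u_Icc[of r t] assms
      by (auto intro!: continuous_intros)
  next
    fix x assume "r < x" "x < t"
    then have "x > 0" using assms by simp
    have d1: "((\<lambda>s. s * (Ju s - j)) has_real_derivative 1 * (Ju x - j) + x * (- (norm (zeta x) ^ 2)))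
        (at_right x)"
      using DERIV_mult[OF DERIV_ident DERIV_diff[OF Ju_right_derivative[OF \<open>x > 0\<close>] DERIV_const]]
      by (rule DERIV_cong) simp
    have d2: "((\<lambda>s. inner (u s - f) (u s - f)) has_real_derivative
        inner (- zeta x) (u x - f) + inner (u x - f) (- zeta x)) (at_right x)"
      unfolding has_real_derivative_at_right_iff_quotient
      using u_right_quotient[OF \<open>x > 0\<close>] u_tendsto_at_right[of x] \<open>x > 0\<close>
      by (intro tendsto_quotient_inner) (auto intro!: tendsto_intros)
    from DERIV_add[OF d1 DERIV_cdivide[OF d2, of 2]]
    show "(H has_real_derivative (Ju x - j) - x * norm (zeta x) ^ 2 + inner (- zeta x) (u x - f))
        (at_right x)"
      unfolding H_def[abs_def] by (rule DERIV_cong) (simp add: inner_commute)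
    have "Ju x + inner (zeta x) (f - u x) \<le> j"
      using subgradient_inequality[OF zeta_in_subdiff[OF \<open>x > 0\<close>], of f] J_f
      by (simp add: Ju_def Jr_def)
    moreover have "inner (- zeta x) (u x - f) = inner (zeta x) (f - u x)"
      by (simp add: inner_diff_right)
    moreover have "0 \<le> x * norm (zeta x) ^ 2" using \<open>x > 0\<close> by simp
    ultimately show "(Ju x - j) - x * norm (zeta x) ^ 2 + inner (- zeta x) (u x - f) \<le> 0"
      by linarith
  qed (use assms in simp)
  then show ?thesis by (simp add: H_def)
qed

lemma Ju_le_J_initial:
  assumes "t > 0" and J_f: "J f = ereal j"
  shows "Ju t \<le> j"
proof -
  define H where "H s = s * (Ju s - j) + inner (u s - f) (u s - f) / 2" for s
  have "((\<lambda>s. s * j) \<longlongrightarrow> 0 * j) (at_right 0)"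
    by (intro tendsto_intros)
  moreover have "((\<lambda>s. inner (u s - f) (u s - f) / 2) \<longlongrightarrow> inner (u 0 - f) (u 0 - f) / 2) (at_right 0)"
    using u_tendsto_at_right[of 0] by (intro tendsto_intros) auto
  ultimately have "(H \<longlongrightarrow> 0) (at_right 0)"
    using tendsto_add[OF tendsto_diff[OF time_weighted_Ju_tendsto_0]]
    unfolding H_def[abs_def] by (fastforce simp: u_0 right_diff_distrib)
  moreover have "eventually (\<lambda>r. H t \<le> H r) (at_right 0)"
    using eventually_at_right_real[OF assms(1)]
    by (rule eventually_mono) (auto simp: H_def intro: weighted_energy_gap_antimono[OF J_f])
  ultimately have "H t \<le> 0"
    by (intro tendsto_le[OF trivial_limit_at_right_real _ tendsto_const])
  moreover have "inner (u t - f) (u t - f) / 2 \<ge> 0" by simp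
  ultimately have "t * (Ju t - j) \<le> 0" unfolding H_def by linarith
  then show ?thesis using assms(1) by (simp add: mult_le_0_iff)
qed

end

section \<open>Finite extinction and the rescaled solution\<close>

locale extinguishing_gradient_flow = homogeneous_gradient_flow J p f u
  for J :: "'a::{real_inner,complete_space} \<Rightarrow> ereal" and p :: real and f u +
  assumes f_in_H0: "f \<in> H0 J" and lambda1_pos: "lambda1 p J > 0" and p_less_2: "p < 2"
begin

lemma f_nonzero: "f \<noteq> 0"
  using f_in_H0 by (simp add: H0_def)

lemma u_in_H0: "t \<ge> 0 \<Longrightarrow> u t \<noteq> 0 \<Longrightarrow> u t \<in> H0 J"
  using inner_null_set_conserved f_in_H0 by (auto simp: H0_def null_set_def)

lemma lambda1_le_rayleigh:
  assumes "t > 0" "u t \<noteq> 0"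
  shows "lambda1 p J \<le> ereal (rayleigh t)"
proof -
  have "lambda1 p J \<le> ereal p * J (u t) / ereal (norm (u t) powr p)"
    unfolding lambda1_def by (rule INF_lower) (use u_in_H0 assms in auto)
  also have "\<dots> = ereal (rayleigh t)"
    using J_u_eq[OF assms(1)] assms(2) by (simp add: rayleigh_def)
  finally show ?thesis .
qed

definition lam1 :: real where
  "lam1 = real_of_ereal (lambda1 p J)"

lemma lambda1_eq_lam1: "lambda1 p J = ereal lam1" and lam1_pos: "lam1 > 0"
proof -
  have "eventually (\<lambda>t. u t \<noteq> 0) (at_right 0)"
    using tendsto_imp_eventually_ne[OF u_tendsto_at_right[of 0]] f_nonzero u_0 by simp
  then have "eventually (\<lambda>t. t > 0 \<and> u t \<noteq> 0) (at_right 0)"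
    using eventually_at_right_less[of 0] by eventually_elim auto
  then obtain t where "t > 0" "u t \<noteq> 0"
    using eventually_happens[of _ "at_right (0::real)"] by auto
  then have "lambda1 p J \<noteq> \<infinity>" using lambda1_le_rayleigh by force
  then show "lambda1 p J = ereal lam1"
    using lambda1_pos unfolding lam1_def by (cases "lambda1 p J") auto
  then show "lam1 > 0" using lambda1_pos by simp
qed

lemma lam1_le_rayleigh: "t > 0 \<Longrightarrow> u t \<noteq> 0 \<Longrightarrow> lam1 \<le> rayleigh t"
  using lambda1_le_rayleigh lambda1_eq_lam1 by fastforce

definition phi :: "real \<Rightarrow> real" where
  "phi t = norm (u t) powr (2 - p)"

lemma phi_nonneg: "phi t \<ge> 0"
  by (simp add: phi_def)

lemma continuous_on_phi: "0 \<le> a \<Longrightarrow> continuous_on {a..b} phi"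
  unfolding phi_def[abs_def] using continuous_on_u_Icc[of a b] p_less_2
  by (intro continuous_on_powr' continuous_intros) auto

lemma phi_right_derivative:
  assumes "t > 0" "u t \<noteq> 0"
  shows "(phi has_real_derivative - (2 - p) * rayleigh t) (at_right t)"
proof -
  define N where "N = inner (u t) (u t)"
  have "N > 0" using assms by (simp add: N_def)
  have "((\<lambda>s. inner (u s) (u s) powr ((2 - p) / 2)) has_real_derivative
      ((2 - p) / 2 * N powr ((2 - p) / 2 - 1)) * (- 2 * p * Ju t)) (at_right t)"
    unfolding N_def
    by (rule DERIV_chain2[OF has_real_derivative_powr norm_sq_right_derivative[OF assms(1)]])
      (use \<open>N > 0\<close> in \<open>simp_all add: N_def\<close>)
  moreover have "phi = (\<lambda>s. inner (u s) (u s) powr ((2 - p) / 2))"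
    by (simp add: phi_def[abs_def] norm_powr_eq_inner_powr)
  moreover have "(2 - p) / 2 - 1 = - p / 2" by (simp add: field_simps)
  then have "((2 - p) / 2 * N powr ((2 - p) / 2 - 1)) * (- 2 * p * Ju t) = - (2 - p) * rayleigh t"
    unfolding rayleigh_eq N_def by (simp add: field_simps)
  ultimately show ?thesis by simp
qed

text \<open>Both estimates integrate phi' = -(2 - p) rayleigh: from below using rayleigh >= lam1,
  from above using that rayleigh is non-increasing.\<close>

lemma phi_decrease_lower:
  assumes "0 \<le> t" "t \<le> T" and nonzero: "\<And>s. t < s \<Longrightarrow> s < T \<Longrightarrow> u s \<noteq> 0"
  shows "(2 - p) * lam1 * (T - t) \<le> phi t - phi T"
proof -
  define F where "F s = phi s + (2 - p) * lam1 * s" for s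
  have "F T \<le> F t"
  proof (rule right_DERIV_nonpos_imp_nonincreasing
      [where f = F and f' = "\<lambda>s. - (2 - p) * rayleigh s + (2 - p) * lam1", OF \<open>t \<le> T\<close>])
    show "continuous_on {t..T} F"
      unfolding F_def[abs_def] using continuous_on_phi[of t T] assms
      by (auto intro!: continuous_intros)
    fix x assume "t < x" "x < T"
    then have "x > 0" "u x \<noteq> 0" using assms by auto
    show "(F has_real_derivative - (2 - p) * rayleigh x + (2 - p) * lam1) (at_right x)"
      unfolding F_def[abs_def]
      using DERIV_add[OF phi_right_derivative[OF \<open>x > 0\<close> \<open>u x \<noteq> 0\<close>]
          DERIV_cmult[OF DERIV_ident, of "(2 - p) * lam1"]]
      by simp
    have "0 \<le> (2 - p) * (rayleigh x - lam1)"
      using lam1_le_rayleigh[OF \<open>x > 0\<close> \<open>u x \<noteq> 0\<close>] p_less_2 by (intro mult_nonneg_nonneg) auto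
    then show "- (2 - p) * rayleigh x + (2 - p) * lam1 \<le> 0" by (simp add: algebra_simps)
  qed
  then show ?thesis by (simp add: F_def algebra_simps)
qed

lemma phi_decrease_upper:
  assumes "0 < t" "t \<le> T" and nonzero: "\<And>s. t \<le> s \<Longrightarrow> s < T \<Longrightarrow> u s \<noteq> 0"
  shows "phi t - phi T \<le> (2 - p) * (T - t) * rayleigh t"
proof -
  define F where "F s = phi s + (2 - p) * rayleigh t * s" for s
  have "F t \<le> F T"
  proof (rule right_DERIV_nonneg_imp_nondecreasing
      [where f = F and f' = "\<lambda>s. - (2 - p) * rayleigh s + (2 - p) * rayleigh t", OF \<open>t \<le> T\<close>])
    show "continuous_on {t..T} F"
      unfolding F_def[abs_def] using continuous_on_phi[of t T] assms
      by (auto intro!: continuous_intros)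
    fix x assume "t < x" "x < T"
    then have "x > 0" "u x \<noteq> 0" using assms by auto
    show "(F has_real_derivative - (2 - p) * rayleigh x + (2 - p) * rayleigh t) (at_right x)"
      unfolding F_def[abs_def]
      using DERIV_add[OF phi_right_derivative[OF \<open>x > 0\<close> \<open>u x \<noteq> 0\<close>]
          DERIV_cmult[OF DERIV_ident, of "(2 - p) * rayleigh t"]]
      by simp
    have "0 \<le> (2 - p) * (rayleigh t - rayleigh x)"
      using rayleigh_antimono[of t x] \<open>t < x\<close> \<open>u x \<noteq> 0\<close> assms p_less_2
      by (intro mult_nonneg_nonneg) auto
    then show "- (2 - p) * rayleigh x + (2 - p) * rayleigh t \<ge> 0" by (simp add: algebra_simps)
  qed
  then show ?thesis by (simp add: F_def algebra_simps)
qed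

lemma u_zero_persists: "0 \<le> t \<Longrightarrow> t \<le> s \<Longrightarrow> u t = 0 \<Longrightarrow> u s = 0"
  using norm_u_antimono[of t s] by simp

lemma u_vanishes: "\<exists>T>0. u T = 0"
proof (rule ccontr)
  assume no_zero: "\<not> (\<exists>T>0. u T = 0)"
  define c where "c = (2 - p) * lam1"
  define T where "T = phi 0 / c + 1"
  have "c > 0" using lam1_pos p_less_2 by (simp add: c_def)
  then have "T > 0" using phi_nonneg[of 0] by (simp add: T_def add_nonneg_pos)
  then have "c * (T - 0) \<le> phi 0 - phi T"
    unfolding c_def using no_zero by (intro phi_decrease_lower) auto
  then have "c * T \<le> phi 0 - phi T" by simp
  moreover have "c * T = phi 0 + c"
    using \<open>c > 0\<close> by (simp add: T_def distrib_left)
  ultimately show False using phi_nonneg[of T] \<open>c > 0\<close> by linarith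
qed

abbreviation Tex :: real where
  "Tex \<equiv> extinction_time u"

lemma extinction_time_eq: "Tex = Inf {T. T > 0 \<and> (\<forall>t\<ge>T. u t = 0)}"
  by (simp add: extinction_time_def)

lemma vanishing_times_nonempty: "{T. T > 0 \<and> (\<forall>t\<ge>T. u t = 0)} \<noteq> {}"
proof -
  obtain T where "T > 0" "u T = 0" using u_vanishes by blast
  then have "T \<in> {T. T > 0 \<and> (\<forall>t\<ge>T. u t = 0)}" using u_zero_persists[of T] by auto
  then show ?thesis by blast
qed

lemma bdd_below_vanishing_times: "bdd_below {T. T > 0 \<and> (\<forall>t\<ge>T. u t = 0)}"
  by (rule bdd_belowI[of _ 0]) auto

lemma u_after_extinction: "t > Tex \<Longrightarrow> u t = 0"
  using cInf_less_iff[OF vanishing_times_nonempty bdd_below_vanishing_times]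
  unfolding extinction_time_eq by force

lemma extinction_time_nonneg: "Tex \<ge> 0"
  unfolding extinction_time_eq using vanishing_times_nonempty by (intro cInf_greatest) auto

lemma u_extinction_time: "u Tex = 0"
proof -
  have "eventually (\<lambda>t. u t = 0) (at_right Tex)"
    using eventually_at_right_less[of Tex] by (rule eventually_mono) (rule u_after_extinction)
  then have "(u \<longlongrightarrow> 0) (at_right Tex)" by (rule tendsto_eventually)
  then show ?thesis
    using tendsto_unique[OF trivial_limit_at_right_real u_tendsto_at_right[OF extinction_time_nonneg]]
    by blast
qed

lemma extinction_time_pos: "Tex > 0"
proof (rule ccontr)
  assume "\<not> Tex > 0"
  then have "Tex = 0" using extinction_time_nonneg by simp
  then show False using u_extinction_time u_0 f_nonzero by simp
qed

lemma u_before_extinction: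
  assumes "0 \<le> t" "t < Tex"
  shows "u t \<noteq> 0"
proof
  assume "u t = 0"
  then have "t > 0" using assms u_0 f_nonzero by (cases "t = 0") auto
  then have "t \<in> {T. T > 0 \<and> (\<forall>s\<ge>T. u s = 0)}" using u_zero_persists[of t] \<open>u t = 0\<close> by auto
  then have "Tex \<le> t" unfolding extinction_time_eq
    by (rule cInf_lower[OF _ bdd_below_vanishing_times])
  then show False using assms by simp
qed

lemma phi_lower_bound: "0 \<le> t \<Longrightarrow> t < Tex \<Longrightarrow> (2 - p) * lam1 * (Tex - t) \<le> phi t"
  using phi_decrease_lower[of t Tex] u_before_extinction u_extinction_time by (simp add: phi_def)

lemma phi_upper_bound: "0 < t \<Longrightarrow> t < Tex \<Longrightarrow> phi t \<le> (2 - p) * (Tex - t) * rayleigh t"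
  using phi_decrease_upper[of t Tex] u_before_extinction u_extinction_time by (simp add: phi_def)

lemma phi_0_upper_bound:
  assumes "J f = ereal j"
  shows "phi 0 \<le> (2 - p) * Tex * (p * j / norm f powr p)"
proof -
  define R where "R s = (2 - p) * (Tex - s) * (p * j / norm (u s) powr p)" for s
  have "eventually (\<lambda>s. phi s \<le> R s) (at_right 0)"
    using eventually_at_right_real[OF extinction_time_pos]
  proof (rule eventually_mono)
    fix s assume s: "s \<in> {0<..<Tex}"
    then have "phi s \<le> (2 - p) * (Tex - s) * rayleigh s" by (intro phi_upper_bound) auto
    also have "\<dots> \<le> R s"
      unfolding R_def rayleigh_def using Ju_le_J_initial[OF _ assms, of s] s p_pos p_less_2
      by (intro mult_left_mono divide_right_mono) auto
    finally show "phi s \<le> R s" .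
  qed
  moreover have "(phi \<longlongrightarrow> phi 0) (at 0 within {0..Tex})"
    using continuous_on_phi[of 0 Tex] extinction_time_pos by (simp add: continuous_on_def)
  then have "(phi \<longlongrightarrow> phi 0) (at_right 0)"
    using extinction_time_pos by (simp add: at_within_Icc_at_right)
  moreover have "(R \<longlongrightarrow> (2 - p) * (Tex - 0) * (p * j / norm (u 0) powr p)) (at_right 0)"
    unfolding R_def[abs_def] using u_tendsto_at_right[of 0] u_0 f_nonzero
    by (intro tendsto_intros) auto
  ultimately show ?thesis
    using u_0 by (intro tendsto_le[OF trivial_limit_at_right_real]) auto
qed

definition rescaled :: "real \<Rightarrow> 'a" where
  "rescaled t = u t /\<^sub>R (1 - t / Tex) powr (1 / (2 - p))"

lemma norm_rescaled_powr:
  assumes "t < Tex"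
  shows "norm (rescaled t) powr (2 - p) = phi t / (1 - t / Tex)"
proof -
  define a where "a = (1 - t / Tex) powr (1 / (2 - p))"
  have "1 - t / Tex > 0" using assms extinction_time_pos by simp
  then have "a > 0" unfolding a_def powr_gt_zero by linarith
  have "a powr (2 - p) = 1 - t / Tex"
    using \<open>1 - t / Tex > 0\<close> p_less_2 by (simp add: a_def powr_powr)
  moreover have "rescaled t = u t /\<^sub>R a" by (simp add: rescaled_def a_def)
  then have "norm (rescaled t) = norm (u t) / a"
    using \<open>a > 0\<close> by (simp add: divide_inverse mult.commute)
  ultimately show ?thesis by (simp add: powr_divide phi_def)
qed

lemma rescaled_lower_bound:
  assumes "0 \<le> t" "t < Tex"
  shows "ereal ((2 - p) * Tex) * lambda1 p J \<le> ereal (norm (rescaled t) powr (2 - p))"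
proof -
  have "1 - t / Tex > 0" using assms by simp
  have "(2 - p) * Tex * lam1 * (1 - t / Tex) = (2 - p) * lam1 * (Tex - t)"
    using extinction_time_pos by (simp add: field_simps)
  also have "\<dots> \<le> phi t" using phi_lower_bound assms by simp
  finally show ?thesis
    using \<open>1 - t / Tex > 0\<close> assms(2) by (simp add: lambda1_eq_lam1 norm_rescaled_powr le_divide_eq)
qed

lemma norm_rescaled_powr_le_rayleigh:
  assumes "0 < t" "t < Tex"
  shows "norm (rescaled t) powr (2 - p) \<le> (2 - p) * Tex * rayleigh t"
proof -
  have "1 - t / Tex > 0" using assms by simp
  have "phi t \<le> (2 - p) * (Tex - t) * rayleigh t" by (rule phi_upper_bound[OF assms])
  also have "\<dots> = (2 - p) * Tex * rayleigh t * (1 - t / Tex)"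
    using extinction_time_pos by (simp add: field_simps)
  finally have "phi t \<le> (2 - p) * Tex * rayleigh t * (1 - t / Tex)" .
  then show ?thesis
    using \<open>1 - t / Tex > 0\<close> assms(2) by (simp add: norm_rescaled_powr divide_le_eq)
qed

lemma rescaled_upper_bound:
  assumes "0 \<le> t" "t < Tex"
  shows "ereal (norm (rescaled t) powr (2 - p)) \<le> ereal ((2 - p) * Tex) * Rayleigh p J u t"
proof (cases "t = 0")
  case False
  then have "t > 0" using assms by simp
  then have "norm (rescaled t) powr (2 - p) \<le> (2 - p) * Tex * rayleigh t"
    using norm_rescaled_powr_le_rayleigh assms(2) by blast
  moreover have "Rayleigh p J u t = ereal (rayleigh t)"
    using J_u_eq[OF \<open>t > 0\<close>] u_before_extinction[OF assms] by (simp add: Rayleigh_def rayleigh_def)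
  ultimately show ?thesis by simp
next
  case True
  then have "norm (rescaled t) powr (2 - p) = phi 0" using norm_rescaled_powr[OF assms(2)] by simp
  have "norm f powr p > 0" using f_nonzero by simp
  show ?thesis
  proof (cases "J f")
    case (real j)
    then have "Rayleigh p J u t = ereal (p * j / norm f powr p)"
      using True u_0 \<open>norm f powr p > 0\<close> by (simp add: Rayleigh_def)
    then show ?thesis using phi_0_upper_bound[OF real] \<open>norm (rescaled t) powr (2 - p) = phi 0\<close>
      by simp
  next
    case PInf
    then have "Rayleigh p J u t = \<infinity>"
      using True u_0 \<open>norm f powr p > 0\<close> p_pos by (simp add: Rayleigh_def)
    then show ?thesis using extinction_time_pos p_less_2 by simp
  qed (use J_neq_MInfty in simp)
qed

lemma bounded_rescaled: "bounded (rescaled ` {0..<Tex})"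
proof -
  define M where "M = max ((2 - p) * Tex * rayleigh (Tex / 2)) (2 * phi 0)"
  have "norm (rescaled t) powr (2 - p) \<le> M" if "0 \<le> t" "t < Tex" for t
  proof (cases "t \<ge> Tex / 2")
    case True
    then have "t > 0" using extinction_time_pos by linarith
    have "rayleigh t \<le> rayleigh (Tex / 2)"
      using True that extinction_time_pos u_before_extinction by (intro rayleigh_antimono) auto
    then have "(2 - p) * Tex * rayleigh t \<le> (2 - p) * Tex * rayleigh (Tex / 2)"
      using extinction_time_pos p_less_2 by (intro mult_left_mono) auto
    then show ?thesis
      using norm_rescaled_powr_le_rayleigh[OF \<open>t > 0\<close> that(2)] by (simp add: M_def)
  next
    case False
    have "phi t \<le> phi 0"
      unfolding phi_def using norm_u_antimono[of 0 t] that p_less_2 by (intro powr_mono2) auto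
    moreover have "1 - t / Tex \<ge> 1 / 2" using False extinction_time_pos by (simp add: field_simps)
    ultimately have "phi t / (1 - t / Tex) \<le> phi 0 / (1 / 2)"
      using phi_nonneg[of 0] by (intro frac_le) auto
    then show ?thesis using that by (simp add: norm_rescaled_powr M_def)
  qed
  then have "norm (rescaled t) \<le> M powr (1 / (2 - p))" if "t \<in> {0..<Tex}" for t
    using that powr_mono2[of "1 / (2 - p)" "norm (rescaled t) powr (2 - p)" M] p_less_2
    by (simp add: powr_powr)
  then show ?thesis unfolding bounded_iff by blast
qed

end

theorem lemma2:
  fixes J :: "'a::{real_inner, complete_space} \<Rightarrow> ereal"
    and p :: real and f :: 'a and u :: "real \<Rightarrow> 'a"
  assumes "convex_fun J" and "lsc_fun J" and "proper_fun J" and "dense_domain J"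
    and "abs_homogeneous p J"
    and "lambda1 p J > 0"
    and "1 \<le> p" and "p < 2"
    and "f \<in> H0 J"
    and "gradient_flow J f u"
  defines "Tex \<equiv> extinction_time u"
  defines "lam \<equiv> 1 / ((2 - p) * Tex)"
  defines "a \<equiv> (\<lambda>t. (1 - (2 - p) * lam * t) powr (1 / (2 - p)))"
  defines "w \<equiv> (\<lambda>t. u t /\<^sub>R a t)"
  shows "(\<forall>t. 0 \<le> t \<and> t < Tex \<longrightarrow>
            ereal ((2 - p) * Tex) * lambda1 p J \<le> ereal (norm (w t) powr (2 - p)) \<and>
            ereal (norm (w t) powr (2 - p)) \<le> ereal ((2 - p) * Tex) * Rayleigh p J u t)
         \<and> bounded (w ` {0..<Tex})"
proof -
  \<comment> \<open>Lower semicontinuity and density of the domain only serve the existence of the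
    flow, which is assumed here.\<close>
  interpret extinguishing_gradient_flow J p f u
    using assms by unfold_locales auto
  have "(2 - p) * lam * t = t / Tex" for t
    using extinction_time_pos p_less_2 by (simp add: lam_def Tex_def)
  then have "w = rescaled"
    unfolding w_def a_def rescaled_def[abs_def] Tex_def by simp
  then show ?thesis
    using rescaled_lower_bound rescaled_upper_bound bounded_rescaled by (simp add: Tex_def)
qed

end
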